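(* Let $\delta\ge 2$ be an integer and $n\ge \max\{8\delta,\tfrac12\delta^2+2\delta+2\}$. Then for every integer $s$ with $1\le s\le \delta-1$, $$\lambda_1\big(D(K_\delta\vee(K_{n-2\delta}+\delta K_1))\big)<\lambda_1\big(D(K_s\vee(K_{n-s-(\delta-s+1)s}+sK_{\delta-s+1}))\big).$$
   Context: For a connected graph $G$, $D(G)$ is the distance matrix and $\lambda_1(D(G))$ its largest eigenvalue. $K_m$ is the complete graph, $+$ is disjoint union, $sH$ is $s$ disjoint copies of $H$, $\vee$ is the join (disjoint union plus all edges between the two parts). *)

theory Defs
  imports "Jordan_Normal_Form.Char_Poly"
begin

text \<open>A finite simple graph on the vertex set {0..<n}, given by its order n and its
  adjacency relation (only pairs of vertices below n are relevant).\<close>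
type_synonym graph = "nat \<times> (nat \<Rightarrow> nat \<Rightarrow> bool)"

definition complete_graph :: "nat \<Rightarrow> graph" where
  "complete_graph m = (m, \<lambda>u v. u < m \<and> v < m \<and> u \<noteq> v)"

text \<open>Disjoint union: the vertices of the second graph are shifted by the order of the first.\<close>
definition gunion :: "graph \<Rightarrow> graph \<Rightarrow> graph" where
  "gunion G H = (fst G + fst H,
     \<lambda>u v. (u < fst G \<and> v < fst G \<and> snd G u v) \<or>
           (fst G \<le> u \<and> fst G \<le> v \<and> u < fst G + fst H \<and> v < fst G + fst H \<and>
            snd H (u - fst G) (v - fst G)))"

definition gjoin :: "graph \<Rightarrow> graph \<Rightarrow> graph" where
  "gjoin G H = (fst G + fst H,
     \<lambda>u v. snd (gunion G H) u v \<or>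
           (u < fst G \<and> fst G \<le> v \<and> v < fst G + fst H) \<or>
           (v < fst G \<and> fst G \<le> u \<and> u < fst G + fst H))"

fun copies :: "nat \<Rightarrow> graph \<Rightarrow> graph" where
  "copies 0 H = (0, \<lambda>_ _. False)"
| "copies (Suc s) H = gunion H (copies s H)"

fun walk :: "graph \<Rightarrow> nat \<Rightarrow> nat \<Rightarrow> nat \<Rightarrow> bool" where
  "walk G 0 u v = (u = v \<and> u < fst G)"
| "walk G (Suc k) u v = (\<exists>w. w < fst G \<and> u < fst G \<and> snd G u w \<and> walk G k w v)"

definition gdist :: "graph \<Rightarrow> nat \<Rightarrow> nat \<Rightarrow> nat" where
  "gdist G u v = (LEAST k. walk G k u v)"

definition distance_matrix :: "graph \<Rightarrow> real mat" where
  "distance_matrix G = mat (fst G) (fst G) (\<lambda>(i, j). real (gdist G i j))"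

text \<open>Largest eigenvalue (the distance matrix is real symmetric, so all eigenvalues are real).\<close>
definition lambda1 :: "real mat \<Rightarrow> real" where
  "lambda1 A = Max {x. eigenvalue A x}"

end

theory Submission
  imports Defs "Jordan_Normal_Form.Spectral_Radius" "HOL-Real_Asymp.Real_Asymp"
begin

text \<open>Both graphs have the shape \<open>K\<^sub>a \<or> (K\<^sub>m + q K\<^sub>c)\<close>, of diameter two, and the partition of
  the vertices into \<open>K\<^sub>a\<close>, \<open>K\<^sub>m\<close> and \<open>q K\<^sub>c\<close> is equitable for the distance matrix. Lifting an
  eigenvector of the \<open>3 \<times> 3\<close> quotient matrix therefore gives an eigenvector of the distance matrix;
  for the largest root \<open>l\<close> of the quotient's characteristic cubic this eigenvector is positive, and
  since the distance matrix is nonnegative, the Collatz--Wielandt argument shows \<open>\<lambda>\<^sub>1 = l\<close>.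
  The cubic of the first graph changes sign on \<open>[n, n + 3\<delta> - 1 - 6\<delta>\<^sup>2/n]\<close>, so its largest root
  \<open>r\<close> lies there; the cubic of the second graph is negative at \<open>r\<close> and therefore has a larger root.\<close>

lemma fst_complete_graph [simp]: "fst (complete_graph c) = c"
  by (simp add: complete_graph_def)

lemma snd_complete_graph [simp]: "snd (complete_graph c) u v \<longleftrightarrow> u < c \<and> v < c \<and> u \<noteq> v"
  by (simp add: complete_graph_def)

lemma fst_copies: "fst (copies q H) = q * fst H"
  by (induct q) (auto simp: gunion_def)

lemma snd_copies_complete_graph:
  assumes c: "0 < c"
  shows "snd (copies q (complete_graph c)) u v \<longleftrightarrow> u < q*c \<and> v < q*c \<and> u \<noteq> v \<and> u div c = v div c"
proof (induct q arbitrary: u v)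
  case 0
  then show ?case by simp
next
  case (Suc q)
  have f: "fst (copies q (complete_graph c)) = q * c" by (simp add: fst_copies)
  show ?case
  proof (cases "u < c")
    case True
    then show ?thesis using c
      by (auto simp: gunion_def f Suc le_div_geq div_eq_0_iff)
  next
    case False
    then show ?thesis using c
      by (cases "v < c") (auto simp: gunion_def f Suc le_div_geq div_eq_0_iff)
  qed
qed

text \<open>Vertices \<open>[0, a)\<close> form \<open>K\<^sub>a\<close>, \<open>[a, a + m)\<close> form \<open>K\<^sub>m\<close>, and the remaining ones the copies of \<open>K\<^sub>c\<close>,
  copy \<open>i\<close> occupying \<open>[a + m + i c, a + m + (i + 1) c)\<close>.\<close>

definition block_graph :: "nat \<Rightarrow> nat \<Rightarrow> nat \<Rightarrow> nat \<Rightarrow> graph" where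
  "block_graph a m q c = gjoin (complete_graph a) (gunion (complete_graph m) (copies q (complete_graph c)))"

definition block_adjacent :: "nat \<Rightarrow> nat \<Rightarrow> nat \<Rightarrow> nat \<Rightarrow> nat \<Rightarrow> bool" where
  "block_adjacent a m c u v \<longleftrightarrow> u < a \<or> v < a \<or> (u < a + m \<and> v < a + m) \<or>
     (a + m \<le> u \<and> a + m \<le> v \<and> (u - a - m) div c = (v - a - m) div c)"

lemma fst_block_graph [simp]: "fst (block_graph a m q c) = a + m + q * c"
  by (simp add: block_graph_def gjoin_def gunion_def fst_copies)

lemma snd_block_graph:
  assumes "0 < c"
  shows "snd (block_graph a m q c) u v \<longleftrightarrow>
    u \<noteq> v \<and> u < a + m + q*c \<and> v < a + m + q*c \<and> block_adjacent a m c u v"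
proof -
  let ?X = "gunion (complete_graph m) (copies q (complete_graph c))"
  have fX: "fst ?X = m + q*c" by (simp add: gunion_def fst_copies)
  have sX: "snd ?X w z \<longleftrightarrow> w \<noteq> z \<and> w < m + q*c \<and> z < m + q*c \<and>
     ((w < m \<and> z < m) \<or> (m \<le> w \<and> m \<le> z \<and> (w - m) div c = (z - m) div c))" for w z
  proof -
    have "snd ?X w z \<longleftrightarrow> (w < m \<and> z < m \<and> w \<noteq> z) \<or> (m \<le> w \<and> m \<le> z \<and> w < m + q*c \<and>
       z < m + q*c \<and> w - m < q*c \<and> z - m < q*c \<and> w - m \<noteq> z - m \<and> (w - m) div c = (z - m) div c)"
      unfolding gunion_def by (simp add: fst_copies snd_copies_complete_graph[OF assms]) blast
    then show ?thesis by linarith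
  qed
  have "snd (block_graph a m q c) u v \<longleftrightarrow> ((u < a \<and> v < a \<and> u \<noteq> v) \<or>
      (a \<le> u \<and> a \<le> v \<and> u < a + (m + q*c) \<and> v < a + (m + q*c) \<and> snd ?X (u - a) (v - a))) \<or>
      (u < a \<and> a \<le> v \<and> v < a + (m + q*c)) \<or> (v < a \<and> a \<le> u \<and> u < a + (m + q*c))"
    unfolding block_graph_def gjoin_def gunion_def[of "complete_graph a" ?X] by (simp add: fX) blast
  also have "\<dots> \<longleftrightarrow> u \<noteq> v \<and> u < a + m + q*c \<and> v < a + m + q*c \<and> block_adjacent a m c u v"
    unfolding sX block_adjacent_def by (cases "u < a"; cases "v < a"; simp add: diff_diff_left; linarith)
  finally show ?thesis .
qed

lemma gdist_eqI:
  assumes "walk G k u v" and "\<And>j. j < k \<Longrightarrow> \<not> walk G j u v"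
  shows "gdist G u v = k"
  unfolding gdist_def using assms by (intro Least_equality) (auto simp: not_less[symmetric])

lemma gdist_block_graph:
  assumes a: "0 < a" and c: "0 < c" and u: "u < a + m + q*c" and v: "v < a + m + q*c"
  shows "gdist (block_graph a m q c) u v = (if u = v then 0 else if block_adjacent a m c u v then 1 else 2)"
proof -
  let ?G = "block_graph a m q c"
  have walk1: "walk ?G (Suc 0) u v \<longleftrightarrow> u \<noteq> v \<and> block_adjacent a m c u v"
    using u v by (simp add: snd_block_graph[OF c])
  have walk2: "walk ?G 2 u v" if "\<not> block_adjacent a m c u v"
  proof -
    have "a \<le> u" "a \<le> v" using that unfolding block_adjacent_def by auto
    then have "snd ?G u 0" "snd ?G 0 v" using a u v by (auto simp: snd_block_graph[OF c] block_adjacent_def)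
    then show ?thesis using a u v by (auto simp: numeral_2_eq_2 intro!: exI[of _ 0])
  qed
  show ?thesis
    using u walk1 walk2 by (auto intro!: gdist_eqI dest: less_2_cases)
qed

definition block_dist :: "nat \<Rightarrow> nat \<Rightarrow> nat \<Rightarrow> nat \<Rightarrow> nat \<Rightarrow> real" where
  "block_dist a m c u v = (if u = v then 0 else if block_adjacent a m c u v then 1 else 2)"

definition block_vec :: "nat \<Rightarrow> nat \<Rightarrow> nat \<Rightarrow> nat \<Rightarrow> real \<Rightarrow> real \<Rightarrow> real \<Rightarrow> real vec" where
  "block_vec a m q c x y z = vec (a + m + q*c) (\<lambda>u. if u < a then x else if u < a + m then y else z)"

lemma distance_matrix_block_graph_carrier:
  "distance_matrix (block_graph a m q c) \<in> carrier_mat (a + m + q*c) (a + m + q*c)"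
  by (simp add: distance_matrix_def)

lemma distance_matrix_block_graph_index:
  assumes "0 < a" "0 < c" "u < a + m + q*c" "v < a + m + q*c"
  shows "distance_matrix (block_graph a m q c) $$ (u, v) = block_dist a m c u v"
  using assms by (simp add: distance_matrix_def gdist_block_graph block_dist_def)

lemma sum_if_eq_0_else_const:
  assumes "u \<in> {l..<h::nat}"
  shows "(\<Sum>j\<in>{l..<h}. if j = u then 0 else k::real) = k * (real (h - l) - 1)"
proof -
  have "(\<Sum>j\<in>{l..<h}. if j = u then 0 else k::real) = (\<Sum>j\<in>{l..<h}. k - (if j = u then k else 0))"
    by (rule sum.cong) auto
  also have "\<dots> = k * real (h - l) - k" using assms by (simp add: sum_subtractf)
  finally show ?thesis by (simp add: algebra_simps)
qed

lemma div_eq_iff_bounds: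
  assumes c: "0 < (c::nat)"
  shows "t div c = i \<longleftrightarrow> i*c \<le> t \<and> t < i*c + c"
proof
  assume "t div c = i"
  moreover have "t = t div c * c + t mod c" by simp
  moreover have "t mod c < c" using c by simp
  ultimately show "i*c \<le> t \<and> t < i*c + c" by (metis add_less_cancel_left le_add1)
next
  assume "i*c \<le> t \<and> t < i*c + c"
  then show "t div c = i" by (intro div_nat_eqI) (auto simp: algebra_simps)
qed

lemma sum_dist_in_copies:
  fixes B q c u :: nat
  assumes c: "0 < c" and u: "u \<in> {B..<B + q*c}"
  shows "(\<Sum>j\<in>{B..<B + q*c}. if j = u then 0 else if (u - B) div c = (j - B) div c then 1 else 2::real)
     = 2 * real q * real c - real c - 1"
proof -
  define i where "i = (u - B) div c"
  have iq: "i < q" using u c unfolding i_def by (intro less_mult_imp_div_less) auto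
  have "(\<Sum>j\<in>{B..<B + q*c}. if j = u then 0 else if (u - B) div c = (j - B) div c then 1 else 2::real)
      = (\<Sum>j\<in>{B..<B + q*c}. 2 - (if (j - B) div c = i then 1 else 0) - (if j = u then 1 else 0))"
    by (rule sum.cong) (auto simp: i_def)
  also have "\<dots> = 2 * real (q*c) - (\<Sum>j\<in>{B..<B + q*c}. if (j - B) div c = i then 1 else 0) - 1"
    using u by (simp add: sum_subtractf)
  also have "(\<Sum>j\<in>{B..<B + q*c}. if (j - B) div c = i then 1 else 0::real)
      = real (card {j\<in>{B..<B + q*c}. (j - B) div c = i})"
    by (simp add: sum.inter_filter[symmetric])
  also have "{j\<in>{B..<B + q*c}. (j - B) div c = i} = {B + i*c..<B + i*c + c}"
  proof -
    have "i*c + c \<le> q*c" using iq by (metis Suc_leI add.commute mult_Suc mult_le_mono1)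
    then show ?thesis using c by (auto simp: div_eq_iff_bounds)
  qed
  finally show ?thesis by simp
qed

lemma sum_block_dist:
  assumes a: "0 < a" and c: "0 < c" and u: "u < a + m + q*c"
  shows "(\<Sum>j\<in>{0..<a + m + q*c}. block_dist a m c u j * (if j < a then x else if j < a + m then y else z))
    = (if u < a then (real a - 1)*x + real m*y + real q*real c*z
       else if u < a + m then real a*x + (real m - 1)*y + 2*real q*real c*z
       else real a*x + 2*real m*y + (2*real q*real c - real c - 1)*z)"
proof -
  let ?g = "\<lambda>j. block_dist a m c u j * (if j < a then x else if j < a + m then y else z)"
  have "sum ?g {0..<a + m + q*c} = sum ?g {0..<a + m} + sum ?g {a + m..<a + m + q*c}"
    by (rule sum.atLeastLessThan_concat[symmetric]) simp_all
  also have "sum ?g {0..<a + m} = sum ?g {0..<a} + sum ?g {a..<a + m}"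
    by (rule sum.atLeastLessThan_concat[symmetric]) simp_all
  finally have split: "sum ?g {0..<a + m + q*c} =
      sum ?g {0..<a} + sum ?g {a..<a + m} + sum ?g {a + m..<a + m + q*c}" .
  consider "u < a" | "a \<le> u" "u < a + m" | "a + m \<le> u" by linarith
  then show ?thesis
  proof cases
    case 1
    have "sum ?g {0..<a} = (\<Sum>j\<in>{0..<a}. if j = u then 0 else x)"
      by (rule sum.cong) (auto simp: block_dist_def block_adjacent_def)
    moreover have "sum ?g {a..<a + m} = (\<Sum>j\<in>{a..<a + m}. y)"
      using 1 by (intro sum.cong) (auto simp: block_dist_def block_adjacent_def)
    moreover have "sum ?g {a + m..<a + m + q*c} = (\<Sum>j\<in>{a + m..<a + m + q*c}. z)"
      using 1 by (intro sum.cong) (auto simp: block_dist_def block_adjacent_def)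
    ultimately show ?thesis using 1 unfolding split by (simp add: sum_if_eq_0_else_const[of u 0 a x])
  next
    case 2
    have "sum ?g {0..<a} = (\<Sum>j\<in>{0..<a}. x)"
      using 2 by (intro sum.cong) (auto simp: block_dist_def block_adjacent_def)
    moreover have "sum ?g {a..<a + m} = (\<Sum>j\<in>{a..<a + m}. if j = u then 0 else y)"
      using 2 by (intro sum.cong) (auto simp: block_dist_def block_adjacent_def)
    moreover have "sum ?g {a + m..<a + m + q*c} = (\<Sum>j\<in>{a + m..<a + m + q*c}. 2*z)"
      using 2 by (intro sum.cong) (auto simp: block_dist_def block_adjacent_def)
    ultimately show ?thesis using 2 unfolding split
      by (simp add: sum_if_eq_0_else_const[of u a "a + m" y] algebra_simps)
  next
    case 3
    have "sum ?g {0..<a} = (\<Sum>j\<in>{0..<a}. x)"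
      using 3 a by (intro sum.cong) (auto simp: block_dist_def block_adjacent_def)
    moreover have "sum ?g {a..<a + m} = (\<Sum>j\<in>{a..<a + m}. 2*y)"
      using 3 by (intro sum.cong) (auto simp: block_dist_def block_adjacent_def)
    moreover have "sum ?g {a + m..<a + m + q*c} = (\<Sum>j\<in>{a + m..<a + m + q*c}.
        (if j = u then 0 else if (u - (a + m)) div c = (j - (a + m)) div c then 1 else 2) * z)"
      using 3 by (intro sum.cong) (auto simp: block_dist_def block_adjacent_def diff_diff_left)
    moreover have "\<dots> = (2*real q*real c - real c - 1) * z"
      unfolding sum_distrib_right[symmetric] using 3 u c by (subst sum_dist_in_copies) auto
    ultimately show ?thesis using 3 a unfolding split by (simp add: algebra_simps)
  qed
qed

lemma distance_matrix_mult_block_vec: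
  assumes a: "0 < a" and c: "0 < c"
  shows "distance_matrix (block_graph a m q c) *\<^sub>v block_vec a m q c x y z =
    block_vec a m q c ((real a - 1)*x + real m*y + real q*real c*z)
       (real a*x + (real m - 1)*y + 2*real q*real c*z)
       (real a*x + 2*real m*y + (2*real q*real c - real c - 1)*z)"
    (is "?D *\<^sub>v ?v = ?w")
proof (rule eq_vecI)
  show "dim_vec (?D *\<^sub>v ?v) = dim_vec ?w"
    by (simp add: block_vec_def distance_matrix_def)
  fix u assume "u < dim_vec ?w"
  then have u: "u < a + m + q*c" by (simp add: block_vec_def)
  have "(?D *\<^sub>v ?v) $ u = (\<Sum>j\<in>{0..<a + m + q*c}. ?D $$ (u, j) * ?v $ j)"
    using u by (simp add: scalar_prod_def block_vec_def distance_matrix_def)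
  also have "\<dots> = (\<Sum>j\<in>{0..<a + m + q*c}. block_dist a m c u j * (if j < a then x else if j < a + m then y else z))"
    by (rule sum.cong) (auto simp: distance_matrix_block_graph_index[OF a c u] block_vec_def)
  finally show "(?D *\<^sub>v ?v) $ u = ?w $ u"
    using u by (simp add: sum_block_dist[OF a c u] block_vec_def)
qed

lemma abs_eigenvalue_le_of_positive_eigenvector:
  fixes A :: "real mat"
  assumes A: "A \<in> carrier_mat N N"
    and nonneg: "\<And>i j. i < N \<Longrightarrow> j < N \<Longrightarrow> 0 \<le> A $$ (i, j)"
    and w: "w \<in> carrier_vec N" and pos: "\<And>i. i < N \<Longrightarrow> 0 < w $ i"
    and Aw: "A *\<^sub>v w = \<rho> \<cdot>\<^sub>v w"
    and ev: "eigenvalue A x"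
  shows "\<bar>x\<bar> \<le> \<rho>"
proof -
  obtain v where v: "v \<in> carrier_vec N" "v \<noteq> 0\<^sub>v N" "A *\<^sub>v v = x \<cdot>\<^sub>v v"
    using ev A unfolding eigenvalue_def eigenvector_def by auto
  obtain k where k: "k < N" "v $ k \<noteq> 0"
    using v(1,2) by (metis carrier_vecD eq_vecI index_zero_vec(1) index_zero_vec(2))
  text \<open>Compare \<open>v\<close> with the multiple \<open>\<theta> w\<close> of \<open>w\<close> that touches \<open>\<bar>v\<bar>\<close> from above at \<open>i\<^sub>0\<close>.\<close>
  define r where "r i = \<bar>v $ i\<bar> / w $ i" for i
  obtain i0 where i0: "i0 < N" and rle: "\<And>j. j < N \<Longrightarrow> r j \<le> r i0"
    using Max_in[of "r ` {0..<N}"] Max_ge[of "r ` {0..<N}"] k(1) by fastforce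
  define \<theta> where "\<theta> = r i0"
  have vb: "\<bar>v $ j\<bar> \<le> \<theta> * w $ j" if "j < N" for j
    using rle[OF that] pos[OF that] unfolding \<theta>_def r_def by (simp add: divide_le_eq)
  have vi0: "\<bar>v $ i0\<bar> = \<theta> * w $ i0" using pos[OF i0] unfolding \<theta>_def r_def by simp
  have "0 < r k" using k pos unfolding r_def by auto
  then have vi0_pos: "0 < \<bar>v $ i0\<bar>" using vi0 rle[OF k(1)] pos[OF i0] unfolding \<theta>_def by simp
  have "\<bar>x\<bar> * \<bar>v $ i0\<bar> = \<bar>(A *\<^sub>v v) $ i0\<bar>" using v i0 by (simp add: abs_mult)
  also have "\<dots> = \<bar>\<Sum>j\<in>{0..<N}. A $$ (i0, j) * v $ j\<bar>" using A v(1) i0 by (simp add: scalar_prod_def)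
  also have "\<dots> \<le> (\<Sum>j\<in>{0..<N}. A $$ (i0, j) * (\<theta> * w $ j))"
    using nonneg[OF i0] vb by (intro order.trans[OF sum_abs] sum_mono) (simp add: abs_mult mult_left_mono)
  also have "\<dots> = \<theta> * (A *\<^sub>v w) $ i0"
    using A w i0 by (simp add: scalar_prod_def sum_distrib_left algebra_simps)
  also have "\<dots> = \<rho> * \<bar>v $ i0\<bar>" using Aw w i0 vi0 by simp
  finally show ?thesis using vi0_pos by simp
qed

lemma lambda1_eq_of_positive_eigenvector:
  fixes A :: "real mat"
  assumes A: "A \<in> carrier_mat N N" and N: "0 < N"
    and nonneg: "\<And>i j. i < N \<Longrightarrow> j < N \<Longrightarrow> 0 \<le> A $$ (i, j)"
    and w: "w \<in> carrier_vec N" and pos: "\<And>i. i < N \<Longrightarrow> 0 < w $ i"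
    and Aw: "A *\<^sub>v w = \<rho> \<cdot>\<^sub>v w"
  shows "lambda1 A = \<rho>"
  unfolding lambda1_def
proof (rule Max_eqI)
  show "finite {x. eigenvalue A x}"
    using card_finite_spectrum(1)[OF A] by (simp add: spectrum_def)
  show "x \<le> \<rho>" if "x \<in> {x. eigenvalue A x}" for x
    using abs_eigenvalue_le_of_positive_eigenvector[OF A nonneg w pos Aw] that by force
  have "w \<noteq> 0\<^sub>v N" using pos[OF N] N by auto
  then show "\<rho> \<in> {x. eigenvalue A x}"
    using A w Aw by (auto simp: eigenvalue_def eigenvector_def)
qed

definition quotient_minor :: "real \<Rightarrow> real \<Rightarrow> real \<Rightarrow> real \<Rightarrow> real" where
  "quotient_minor m q c l = (l - m + 1) * (l - (2*q*c - c - 1)) - 4*m*q*c"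

text \<open>The characteristic polynomial \<open>det (l I - B)\<close> of the quotient matrix
  \<open>B = [[a - 1, m, q c], [a, m - 1, 2 q c], [a, 2 m, 2 q c - c - 1]]\<close> read off from
  \<open>distance_matrix_mult_block_vec\<close>, expanded along the first row; \<open>quotient_minor\<close> is the
  minor of the \<open>(1, 1)\<close> entry.\<close>

definition quotient_char_poly :: "real \<Rightarrow> real \<Rightarrow> real \<Rightarrow> real \<Rightarrow> real \<Rightarrow> real" where
  "quotient_char_poly a m q c l =
     (l - a + 1) * quotient_minor m q c l - m*a*(l + c + 1) - q*c*a*(l + m + 1)"

lemma continuous_on_quotient_char_poly: "continuous_on S (\<lambda>l. quotient_char_poly a m q c l)"
  unfolding quotient_char_poly_def quotient_minor_def by (intro continuous_intros)

lemma quotient_char_poly_root_above: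
  assumes neg: "quotient_char_poly a m q c x < 0"
  obtains r where "x < r" "quotient_char_poly a m q c r = 0"
proof -
  have "filterlim (\<lambda>l. quotient_char_poly a m q c l) at_top at_top"
    unfolding quotient_char_poly_def quotient_minor_def by real_asymp
  then have "eventually (\<lambda>l. 0 < quotient_char_poly a m q c l \<and> x < l) at_top"
    by (simp add: filterlim_at_top_dense eventually_conj eventually_gt_at_top)
  then obtain M where M: "0 < quotient_char_poly a m q c M" "x < M"
    by (auto simp: eventually_at_top_linorder)
  then obtain r where r: "x \<le> r" "quotient_char_poly a m q c r = 0"
    using IVT'[of "quotient_char_poly a m q c" x 0 M] neg continuous_on_quotient_char_poly by fastforce
  have "x < r" using r neg by (cases "x = r") auto
  then show ?thesis using r(2) by (rule that)
qed

lemma block_vec_eigenvector: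
  assumes a: "0 < a" and c: "0 < c"
    and root: "quotient_char_poly (real a) (real m) (real q) (real c) l = 0"
  shows "distance_matrix (block_graph a m q c) *\<^sub>v block_vec a m q c
      (quotient_minor (real m) (real q) (real c) l) (real a * (l + real c + 1)) (real a * (l + real m + 1))
   = l \<cdot>\<^sub>v block_vec a m q c
      (quotient_minor (real m) (real q) (real c) l) (real a * (l + real c + 1)) (real a * (l + real m + 1))"
proof -
  let ?d = "quotient_minor (real m) (real q) (real c) l"
    and ?y = "real a * (l + real c + 1)" and ?z = "real a * (l + real m + 1)"
  have smult: "l \<cdot>\<^sub>v block_vec a m q c x y z = block_vec a m q c (l*x) (l*y) (l*z)" for x y z
    by (rule eq_vecI) (auto simp: block_vec_def)
  have row1: "(real a - 1) * ?d + real m * ?y + real q * real c * ?z = l * ?d"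
    using root unfolding quotient_char_poly_def by (simp add: algebra_simps)
  have row2: "real a * ?d + (real m - 1) * ?y + 2 * real q * real c * ?z = l * ?y"
    unfolding quotient_minor_def by (simp add: algebra_simps)
  have row3: "real a * ?d + 2 * real m * ?y + (2 * real q * real c - real c - 1) * ?z = l * ?z"
    unfolding quotient_minor_def by (simp add: algebra_simps)
  show ?thesis
    unfolding distance_matrix_mult_block_vec[OF a c] smult row1 row2 row3 ..
qed

lemma lambda1_block_graph:
  assumes a: "0 < a" and c: "0 < c" and q: "0 < q" and l: "real a - 1 \<le> l"
    and root: "quotient_char_poly (real a) (real m) (real q) (real c) l = 0"
  shows "lambda1 (distance_matrix (block_graph a m q c)) = l"
proof -
  let ?d = "quotient_minor (real m) (real q) (real c) l"
  have "(l - real a + 1) * ?d = real m * real a * (l + real c + 1) + real q * real c * real a * (l + real m + 1)"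
    using root unfolding quotient_char_poly_def by simp
  also have "\<dots> > 0"
    using a c q l by (intro add_nonneg_pos) (auto intro!: mult_pos_pos)
  finally have d: "0 < ?d"
    using l by (simp add: zero_less_mult_iff)
  show ?thesis
  proof (rule lambda1_eq_of_positive_eigenvector[OF distance_matrix_block_graph_carrier _ _ _ _ block_vec_eigenvector[OF a c root]])
    show "0 < a + m + q*c" using a by simp
    show "0 \<le> distance_matrix (block_graph a m q c) $$ (i, j)" if "i < a + m + q*c" "j < a + m + q*c" for i j
      using that by (simp add: distance_matrix_def)
  qed (use d a l in \<open>auto simp: block_vec_def\<close>)
qed

definition extremal_poly :: "real \<Rightarrow> real \<Rightarrow> real \<Rightarrow> real" where
  "extremal_poly d n = quotient_char_poly d (n - 2*d) d 1"

definition competitor_poly :: "real \<Rightarrow> real \<Rightarrow> real \<Rightarrow> real \<Rightarrow> real" where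
  "competitor_poly d n s = quotient_char_poly s (n - s - (d - s + 1)*s) s (d - s + 1)"

text \<open>The polynomial inequalities below are certified by substituting \<open>d = a + 2\<close>, \<open>n = 8 d + t\<close>
  (and similar shifts), which turns them into polynomials in \<open>a, t, \<dots> \<ge> 0\<close> with positive
  coefficients.\<close>

lemma extremal_poly_neg_at_order:
  fixes d n :: real
  assumes "2 \<le> d" "8*d \<le> n"
  shows "extremal_poly d n n < 0"
proof -
  define a t where "a = d - 2" and "t = n - 8*d"
  have "0 \<le> a" "0 \<le> t" using assms by (auto simp: a_def t_def)
  then have "0 < 146*a^3 + 42*a^2*t + 831*a^2 + 3*a*t^2 + 155*a*t + 1548*a + 5*t^2 + 139*t + 938"
    by (intro add_nonneg_pos mult_nonneg_nonneg zero_le_power) auto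
  also have "\<dots> = - extremal_poly d n n"
    unfolding a_def t_def extremal_poly_def quotient_char_poly_def quotient_minor_def
    by (simp add: algebra_simps power2_eq_square power3_eq_cube)
  finally show ?thesis by simp
qed

lemma extremal_poly_nonneg_at_upper:
  fixes d n :: real
  assumes d: "2 \<le> d" and n: "8*d \<le> n"
  shows "0 \<le> extremal_poly d n (n + 3*d - 1 - 6*d^2/n)"
proof -
  define U where "U = n + 3*d - 1 - 6*d^2/n"
  define a t where "a = d - 2" and "t = n - 8*d"
  have n0: "0 < n" and a0: "0 \<le> a" and t0: "0 \<le> t" using d n by (auto simp: a_def t_def)
  have Un: "U*n = n^2 + (3*d - 1)*n - 6*d^2"
    unfolding U_def using n0 by (simp add: field_simps power2_eq_square)
  text \<open>Clearing the denominator: \<open>n\<^sup>3 p(x)\<close> is a polynomial in \<open>n\<close>, \<open>d\<close> and \<open>x n\<close>.\<close>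
  have hom: "n^3 * extremal_poly d n x = (let y = x*n in n^4*d^2 - 2*n^4*d - 2*n^4 - 2*n^3*d^3
      + 5*n^3*d^2 - 2*n^3*d*y - 3*n^3*y + 2*n^3 + 5*n^2*d^2*y - n^2*d*y - n^2*y^2 + 5*n^2*y
      - n*d*y^2 + 4*n*y^2 + y^3)" for x
    unfolding extremal_poly_def quotient_char_poly_def quotient_minor_def Let_def
    by (simp add: algebra_simps power2_eq_square power3_eq_cube power4_eq_xxxx)
  have "0 \<le> 12584*a^6 + 7968*a^5*t + 168064*a^5 + 1812*a^4*t^2 + 88388*a^4*t + 925600*a^4
      + 175*a^3*t^3 + 16134*a^3*t^2 + 388384*a^3*t + 2695680*a^3 + 6*a^2*t^4 + 1184*a^2*t^3
      + 53316*a^2*t^2 + 846432*a^2*t + 4384640*a^2 + 28*a*t^4 + 2636*a*t^3 + 77640*a*t^2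
      + 916096*a*t + 3780608*a + 32*t^4 + 1936*t^3 + 42096*t^2 + 394304*t + 1351168"
    using a0 t0 by (intro add_nonneg_nonneg mult_nonneg_nonneg zero_le_power) auto
  also have "\<dots> = 6*n^4*d^2 + 4*n^4*d - 17*n^3*d^3 + 6*n^3*d^2 - 84*n^2*d^4 - 42*n^2*d^3
      + 288*n*d^5 + 36*n*d^4 - 216*d^6"
    unfolding a_def t_def by (simp add: eval_nat_numeral power_Suc algebra_simps)
  also have "\<dots> = n^3 * extremal_poly d n U"
    unfolding hom Let_def Un by (simp add: eval_nat_numeral power_Suc algebra_simps)
  finally show ?thesis unfolding U_def using n0 by (simp add: zero_le_mult_iff)
qed

lemma extremal_poly_root:
  fixes d n :: real
  assumes d: "2 \<le> d" and n: "8*d \<le> n"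
  obtains r where "n \<le> r" "r \<le> n + 3*d - 1 - 6*d^2/n" "extremal_poly d n r = 0"
proof -
  have "6*d^2/n \<le> 6*d^2/(8*d)" using d n by (intro divide_left_mono) auto
  also have "\<dots> = 3*d/4" using d by (simp add: power2_eq_square)
  finally have "n \<le> n + 3*d - 1 - 6*d^2/n" using d by linarith
  then show ?thesis
    using IVT'[of "extremal_poly d n" n 0 "n + 3*d - 1 - 6*d^2/n"] that
      extremal_poly_neg_at_order[OF d n] extremal_poly_nonneg_at_upper[OF d n]
      continuous_on_quotient_char_poly
    unfolding extremal_poly_def by fastforce
qed

lemma competitor_poly_minus_extremal_poly:
  fixes n s k r :: real
  shows "competitor_poly (s + k) n s (n + r) - extremal_poly (s + k) n (n + r)
   = k * ((-3*(s-1)*n^2 + n*(2*s^2*k + 8*s^2 + s*k - 14*s - 6*k + 4)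
           + (-(s^3*k) - 3*s^3 + 2*s^2*k + 13*s^2 + 7*s*k - 9*s + 2*k^2 - 5*k + 1))
        + (-(4*s - 5)*n + (2*s^2*k + 7*s^2 + s*k - 10*s - 5*k + 3))*r + (2 - s)*r^2)"
  unfolding competitor_poly_def extremal_poly_def quotient_char_poly_def quotient_minor_def
  by (simp add: algebra_simps power2_eq_square power3_eq_cube)

lemma gap_constant_coeff_neg:
  fixes n s k :: real
  assumes s: "2 \<le> s" and k: "1 \<le> k" and n: "(s + k + 2)^2 \<le> 2*n"
  shows "-3*(s-1)*n^2 + n*(2*s^2*k + 8*s^2 + s*k - 14*s - 6*k + 4)
         + (-(s^3*k) - 3*s^3 + 2*s^2*k + 13*s^2 + 7*s*k - 9*s + 2*k^2 - 5*k + 1) < 0"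
proof -
  define a b t where "a = s - 2" and "b = k - 1" and "t = n - (s + k + 2)^2/2"
  have sa: "s = a + 2" and kb: "k = b + 1" and nt: "2*n = (a + b + 5)^2 + 2*t"
    unfolding a_def b_def t_def by (simp_all add: algebra_simps)
  have "0 \<le> a" "0 \<le> b" "0 \<le> t" using s k n unfolding a_def b_def t_def by simp_all
  have "0 < 3*a^5 + 8*a^4*b + 43*a^4 + 10*a^3*b^2 + 98*a^3*b + 12*a^3*t + 272*a^3 + 8*a^2*b^3
      + 102*a^2*b^2 + 16*a^2*b*t + 500*a^2*b + 92*a^2*t + 922*a^2 + 3*a*b^4 + 54*a*b^3
      + 12*a*b^2*t + 380*a*b^2 + 108*a*b*t + 1270*a*b + 12*a*t^2 + 312*a*t + 1745*a + 3*b^4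
      + 52*b^3 + 12*b^2*t + 338*b^2 + 104*b*t + 1008*b + 12*t^2 + 252*t + 1187"
    using \<open>0 \<le> a\<close> \<open>0 \<le> b\<close> \<open>0 \<le> t\<close>
    by (intro add_nonneg_pos mult_nonneg_nonneg zero_le_power) auto
  also have "\<dots> = 3*(s-1)*(2*n)^2 - 2*(2*n)*(2*s^2*k + 8*s^2 + s*k - 14*s - 6*k + 4)
      - 4*(-(s^3*k) - 3*s^3 + 2*s^2*k + 13*s^2 + 7*s*k - 9*s + 2*k^2 - 5*k + 1)"
    unfolding sa kb nt by (simp add: eval_nat_numeral power_Suc algebra_simps)
  finally show ?thesis by (simp add: algebra_simps power2_eq_square)
qed

lemma gap_linear_coeff_neg:
  fixes n s k :: real
  assumes s: "2 \<le> s" and k: "1 \<le> k" and n: "(s + k + 2)^2 \<le> 2*n"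
  shows "-(4*s - 5)*n + (2*s^2*k + 7*s^2 + s*k - 10*s - 5*k + 3) < 0"
proof -
  define a b t where "a = s - 2" and "b = k - 1" and "t = n - (s + k + 2)^2/2"
  have sa: "s = a + 2" and kb: "k = b + 1" and nt: "2*n = (a + b + 5)^2 + 2*t"
    unfolding a_def b_def t_def by (simp_all add: algebra_simps)
  have "0 \<le> a" "0 \<le> b" "0 \<le> t" using s k n unfolding a_def b_def t_def by simp_all
  have "0 < 4*a^3 + 4*a^2*b + 25*a^2 + 4*a*b^2 + 28*a*b + 8*a*t + 76*a + 3*b^2 + 20*b + 6*t + 43"
    using \<open>0 \<le> a\<close> \<open>0 \<le> b\<close> \<open>0 \<le> t\<close>
    by (intro add_nonneg_pos mult_nonneg_nonneg zero_le_power) auto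
  also have "\<dots> = (4*s - 5)*(2*n) - 2*(2*s^2*k + 7*s^2 + s*k - 10*s - 5*k + 3)"
    unfolding sa kb nt by (simp add: eval_nat_numeral power_Suc algebra_simps)
  finally show ?thesis by (simp add: algebra_simps)
qed

lemma competitor_poly_less_extremal_poly:
  fixes d n s l :: real
  assumes s: "2 \<le> s" and ds: "1 \<le> d - s" and n: "(d + 2)^2 \<le> 2*n" and l: "n \<le> l"
  shows "competitor_poly d n s l < extremal_poly d n l"
proof -
  define k r where "k = d - s" and "r = l - n"
  have dk: "d = s + k" and lr: "l = n + r" by (simp_all add: k_def r_def)
  have k: "1 \<le> k" and n': "(s + k + 2)^2 \<le> 2*n" and "0 \<le> r" using ds n l by (simp_all add: k_def r_def)
  have "(-(4*s - 5)*n + (2*s^2*k + 7*s^2 + s*k - 10*s - 5*k + 3))*r \<le> 0"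
    using gap_linear_coeff_neg[OF s k n'] \<open>0 \<le> r\<close> by (simp add: mult_nonpos_nonneg)
  moreover have "(2 - s)*r^2 \<le> 0" using s by (simp add: mult_nonpos_nonneg)
  ultimately have "(-3*(s-1)*n^2 + n*(2*s^2*k + 8*s^2 + s*k - 14*s - 6*k + 4)
           + (-(s^3*k) - 3*s^3 + 2*s^2*k + 13*s^2 + 7*s*k - 9*s + 2*k^2 - 5*k + 1))
        + (-(4*s - 5)*n + (2*s^2*k + 7*s^2 + s*k - 10*s - 5*k + 3))*r + (2 - s)*r^2 < 0"
    using gap_constant_coeff_neg[OF s k n'] by linarith
  then have "competitor_poly d n s l - extremal_poly d n l < 0"
    unfolding dk lr competitor_poly_minus_extremal_poly using k by (simp add: mult_pos_neg)
  then show ?thesis by simp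
qed

lemma competitor_poly_less_extremal_poly_single:
  fixes d n l :: real
  assumes d: "2 \<le> d" and n: "8*d \<le> n" and l: "n \<le> l" "l \<le> n + 3*d - 1 - 6*d^2/n"
  shows "competitor_poly d n 1 l < extremal_poly d n l"
proof -
  define B C U where "B = n + 2*d - 2" and "C = n*(d + 1) - 2*d^2 + d - 1"
    and "U = n + 3*d - 1 - 6*d^2/n"
  define a t where "a = d - 2" and "t = n - 8*d"
  have a0: "0 \<le> a" and t0: "0 \<le> t" and n0: "0 < n" using d n by (auto simp: a_def t_def)
  have diff: "competitor_poly d n 1 l - extremal_poly d n l = (d - 1) * (l*(l - B) - C)"
    unfolding B_def C_def competitor_poly_def extremal_poly_def quotient_char_poly_def quotient_minor_def
    by (simp add: eval_nat_numeral power_Suc algebra_simps)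
  have "0 < 6*a^2 + a*t + 33*a + 3*t + 41"
    using a0 t0 by (intro add_nonneg_pos mult_nonneg_nonneg zero_le_power) auto
  also have "\<dots> = C" unfolding C_def a_def t_def by (simp add: eval_nat_numeral power_Suc algebra_simps)
  finally have C: "0 < C" .
  have Un: "U*n = n^2 + (3*d - 1)*n - 6*d^2"
    unfolding U_def using n0 by (simp add: field_simps power2_eq_square)
  have "n^2 * (U*(U - B) - C) = (U*n)*(U*n - B*n) - C*n^2"
    by (simp add: eval_nat_numeral power_Suc algebra_simps)
  also have "\<dots> = - (220*a^4 + 40*a^3*t + 1696*a^3 + a^2*t^2 + 224*a^2*t + 4896*a^2 + 3*a*t^2
      + 416*a*t + 6272*a + 2*t^2 + 256*t + 3008)"
    unfolding Un B_def C_def a_def t_def by (simp add: eval_nat_numeral power_Suc algebra_simps)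
  also have "\<dots> < 0"
    using a0 t0 by (simp only: neg_less_0_iff_less) (intro add_nonneg_pos mult_nonneg_nonneg zero_le_power; simp)
  finally have UB: "U*(U - B) < C" using n0 by (simp add: mult_less_0_iff)
  have "l*(l - B) < C"
  proof (cases "l \<le> B")
    case True
    then show ?thesis using l n0 C by (smt (verit) mult_nonneg_nonpos)
  next
    case False
    then have "l*(l - B) \<le> U*(U - B)" using l n0 unfolding U_def by (intro mult_mono) auto
    then show ?thesis using UB by linarith
  qed
  then show ?thesis using diff d by (smt (verit) mult_pos_neg)
qed

lemma of_nat_competitor_order:
  assumes "s \<le> \<delta>"
  shows "real (s + (\<delta> - s + 1) * s) = real s + (real \<delta> - real s + 1) * real s"
proof -
  have "real (\<delta> - s + 1) = real \<delta> - real s + 1" using assms by (simp add: of_nat_diff)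
  then show ?thesis by (simp only: of_nat_add[of s] of_nat_mult)
qed

lemma competitor_order_le:
  fixes \<delta> n s :: nat
  assumes s: "s \<le> \<delta>" and n: "(real \<delta>)^2 / 2 + 2 * real \<delta> + 2 \<le> real n"
  shows "s + (\<delta> - s + 1) * s \<le> n"
proof -
  have amgm: "4 * ((real \<delta> - real s + 1) * real s) \<le> (real \<delta> + 1)^2"
    using zero_le_power2[of "real \<delta> + 1 - 2 * real s"] by (simp add: power2_eq_square algebra_simps)
  have sq: "(real \<delta> + 1)^2 = (real \<delta>)^2 + 2 * real \<delta> + 1"
    by (simp add: power2_sum)
  have "real (s + (\<delta> - s + 1) * s) \<le> real n"
    unfolding of_nat_competitor_order[OF s] using amgm sq s n zero_le_power2[of "real \<delta>"] by linarith
  then show ?thesis by linarith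
qed

lemma lambda1_extremal_graph:
  assumes "0 < \<delta>" "2*\<delta> \<le> n" "real \<delta> - 1 \<le> r" "extremal_poly (real \<delta>) (real n) r = 0"
  shows "lambda1 (distance_matrix (block_graph \<delta> (n - 2*\<delta>) \<delta> 1)) = r"
  using assms by (intro lambda1_block_graph) (simp_all add: extremal_poly_def of_nat_diff)

lemma lambda1_competitor_graph:
  assumes s: "0 < s" "s \<le> \<delta>" and n: "s + (\<delta> - s + 1) * s \<le> n" and r: "real s - 1 \<le> r"
    and root: "competitor_poly (real \<delta>) (real n) (real s) r = 0"
  shows "lambda1 (distance_matrix (block_graph s (n - s - (\<delta> - s + 1) * s) s (\<delta> - s + 1))) = r"
proof (rule lambda1_block_graph)
  have m: "real (n - s - (\<delta> - s + 1) * s) = real n - real s - (real \<delta> - real s + 1) * real s"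
    by (simp only: diff_diff_left of_nat_diff[OF n] of_nat_competitor_order[OF s(2)])
  have c: "real (\<delta> - s + 1) = real \<delta> - real s + 1" using s by (simp add: of_nat_diff)
  show "quotient_char_poly (real s) (real (n - s - (\<delta> - s + 1) * s)) (real s) (real (\<delta> - s + 1)) r = 0"
    unfolding m c using root by (simp only: competitor_poly_def)
qed (use s r in auto)

theorem mainTheorem5:
  fixes \<delta> n s :: nat
  assumes "\<delta> \<ge> 2"
    and "n \<ge> 8 * \<delta>"
    and "real n \<ge> (real \<delta>)^2 / 2 + 2 * real \<delta> + 2"
    and "1 \<le> s" and "s \<le> \<delta> - 1"
  shows "lambda1 (distance_matrix
           (gjoin (complete_graph \<delta>) (gunion (complete_graph (n - 2 * \<delta>)) (copies \<delta> (complete_graph 1)))))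
       < lambda1 (distance_matrix
           (gjoin (complete_graph s)
              (gunion (complete_graph (n - s - (\<delta> - s + 1) * s)) (copies s (complete_graph (\<delta> - s + 1))))))"
proof -
  have d: "2 \<le> real \<delta>" and n8: "8 * real \<delta> \<le> real n" and s: "2 \<le> real s \<or> s = 1"
    and ds: "1 \<le> real \<delta> - real s" and n2: "(real \<delta> + 2)^2 \<le> 2 * real n"
    using assms by (auto simp: power2_eq_square algebra_simps)
  obtain r1 where r1: "real n \<le> r1" "r1 \<le> real n + 3 * real \<delta> - 1 - 6 * (real \<delta>)^2 / real n"
      and root1: "extremal_poly \<delta> n r1 = 0"
    using extremal_poly_root[OF d n8] by blast
  have "competitor_poly \<delta> n s r1 < extremal_poly \<delta> n r1"
    using s competitor_poly_less_extremal_poly[OF _ ds n2 r1(1)]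
      competitor_poly_less_extremal_poly_single[OF d n8 r1] by auto
  then obtain r2 where r2: "r1 < r2" and root2: "competitor_poly \<delta> n s r2 = 0"
    using root1 quotient_char_poly_root_above unfolding competitor_poly_def by (metis)
  have "lambda1 (distance_matrix (block_graph \<delta> (n - 2 * \<delta>) \<delta> 1)) = r1"
    using assms r1 root1 by (intro lambda1_extremal_graph) auto
  moreover have "lambda1 (distance_matrix (block_graph s (n - s - (\<delta> - s + 1) * s) s (\<delta> - s + 1))) = r2"
    using assms r1 r2 root2 competitor_order_le by (intro lambda1_competitor_graph) auto
  ultimately show ?thesis using r2 unfolding block_graph_def by simp
qed

end
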